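(* Let $s,d$ be integers with $1\le s\le d$ and let $\ell\in\mathcal L$. For any $a>0,\tau>0$, $$\inf_{\hat T}\sup_{P_\xi\in\mathcal G_{a,\tau}}\sup_{\sigma>0}\sup_{\theta\in\Theta_s}\mathbf E_{\theta,P_\xi,\sigma}\,\ell\Big(c\,\big(\sqrt s\log^{1/a}(ed/s)\big)^{-1}\Big|\frac{\hat T-\|\theta\|_2}{\sigma}\Big|\Big)\ge c',$$ and for any $a\ge2,\tau>0$, $$\inf_{\hat T}\sup_{P_\xi\in\mathcal P_{a,\tau}}\sup_{\sigma>0}\sup_{\theta\in\Theta_s}\mathbf E_{\theta,P_\xi,\sigma}\,\ell\Big(\bar c\,\big(\sqrt s(d/s)^{1/a}\big)^{-1}\Big|\frac{\hat T-\|\theta\|_2}{\sigma}\Big|\Big)\ge \bar c',$$ where $c,\bar c,c',\bar c'>0$ are constants depending only on $\ell$, $\tau$ and $a$.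
   Context: Model: $Y_i=\theta_i+\sigma\xi_i$, $i=1,\dots,d$, with $\theta\in\mathbb R^d$, $\sigma>0$, $\xi_i$ i.i.d. with distribution $P_\xi$, $\mathbf E\xi_1=0$, $\mathbf E\xi_1^2=1$; $\mathbf E_{\theta,P_\xi,\sigma}$ is expectation under this model; $\Theta_s=\{\theta:\|\theta\|_0\le s\}$ ($\|\theta\|_0$ = number of nonzero coordinates). For $a,\tau>0$, $\mathcal G_{a,\tau}$: distributions with $\mathbf E\xi_1=0,\mathbf E\xi_1^2=1$, $\mathbf P(|\xi_1|>t)\le2e^{-(t/\tau)^a}$ for all $t\ge2$; for $a\ge2,\tau>0$, $\mathcal P_{a,\tau}$: such distributions with $\mathbf P(|\xi_1|>t)\le(\tau/t)^a$ for all $t\ge2$. $\mathcal L$ is the set of nondecreasing $\ell:[0,\infty)\to[0,\infty)$ with $\ell(0)=0$, $\ell\not\equiv0$. $\inf_{\hat T}$ is the infimum over all estimators (measurable functions of $Y$). *)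

theory Defs
  imports "HOL-Probability.Probability"
begin

definition loss_class :: "(real \<Rightarrow> real) set" where
  "loss_class = {l. (\<forall>x y. 0 \<le> x \<longrightarrow> x \<le> y \<longrightarrow> l x \<le> l y)
                    \<and> (\<forall>x\<ge>0. l x \<ge> 0) \<and> l 0 = 0 \<and> (\<exists>x\<ge>0. l x \<noteq> 0)}"

definition std_noise :: "real measure set" where
  "std_noise = {P. prob_space P \<and> sets P = sets borel
                  \<and> integrable P (\<lambda>x. x) \<and> integrable P (\<lambda>x. x ^ 2)
                  \<and> (\<integral>x. x \<partial>P) = 0 \<and> (\<integral>x. x ^ 2 \<partial>P) = 1}"

definition subexp_class :: "real \<Rightarrow> real \<Rightarrow> real measure set" where
  "subexp_class a \<tau> = {P \<in> std_noise.
      \<forall>t\<ge>2. measure P {x. \<bar>x\<bar> > t} \<le> 2 * exp (- ((t / \<tau>) powr a))}"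

definition poly_class :: "real \<Rightarrow> real \<Rightarrow> real measure set" where
  "poly_class a \<tau> = {P \<in> std_noise.
      \<forall>t\<ge>2. measure P {x. \<bar>x\<bar> > t} \<le> (\<tau> / t) powr a}"

text \<open>Vectors of R^d are functions nat => real vanishing outside {..<d}.\<close>
definition sparse_set :: "nat \<Rightarrow> nat \<Rightarrow> (nat \<Rightarrow> real) set" where
  "sparse_set d s = {\<theta>. (\<forall>i\<ge>d. \<theta> i = 0) \<and> card {i. i < d \<and> \<theta> i \<noteq> 0} \<le> s}"

definition l2norm :: "nat \<Rightarrow> (nat \<Rightarrow> real) \<Rightarrow> real" where
  "l2norm d \<theta> = sqrt (\<Sum>i<d. (\<theta> i)\<^sup>2)"

definition obs_law :: "nat \<Rightarrow> (nat \<Rightarrow> real) \<Rightarrow> real \<Rightarrow> real measure \<Rightarrow> (nat \<Rightarrow> real) measure" where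
  "obs_law d \<theta> \<sigma> P = PiM {..<d} (\<lambda>i. distr P borel (\<lambda>x. \<theta> i + \<sigma> * x))"

definition estimators :: "nat \<Rightarrow> ((nat \<Rightarrow> real) \<Rightarrow> real) set" where
  "estimators d = borel_measurable (PiM {..<d} (\<lambda>_. borel))"

definition risk :: "(real \<Rightarrow> real) \<Rightarrow> real \<Rightarrow> nat \<Rightarrow> ((nat \<Rightarrow> real) \<Rightarrow> real)
                    \<Rightarrow> (nat \<Rightarrow> real) \<Rightarrow> real \<Rightarrow> real measure \<Rightarrow> ennreal" where
  "risk l r d T \<theta> \<sigma> P =
     (\<integral>\<^sup>+ y. ennreal (l (r * \<bar>(T y - l2norm d \<theta>) / \<sigma>\<bar>)) \<partial>obs_law d \<theta> \<sigma> P)"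

definition worst_risk :: "(real \<Rightarrow> real) \<Rightarrow> real \<Rightarrow> nat \<Rightarrow> nat \<Rightarrow> real measure set
                          \<Rightarrow> ((nat \<Rightarrow> real) \<Rightarrow> real) \<Rightarrow> ennreal" where
  "worst_risk l r d s \<G> T =
     Sup {risk l r d T \<theta> \<sigma> P | P \<sigma> \<theta>. P \<in> \<G> \<and> \<sigma> > 0 \<and> \<theta> \<in> sparse_set d s}"

end

theory Submission
  imports Defs
begin

text \<open>
  Take \<open>\<sigma> = 1\<close>, \<open>\<theta> = 0\<close> and noise \<open>\<xi> = t + \<delta> e\<close>, where \<open>t\<close> is \<open>0\<close> with probability \<open>1 - p\<close> and \<open>\<plusminus>M\<close>
  otherwise, \<open>e\<close> is a Rademacher sign and \<open>p M\<^sup>2 + \<delta>\<^sup>2 = 1\<close>. Conditionally on the spikes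
  \<open>\<theta>' = (t\<^sub>i)\<close>, the observation is exactly that of the model with signal \<open>\<theta>'\<close>, scale \<open>\<delta>\<close> and
  Rademacher noise, which is also admissible. So an estimator must be close both to \<open>0\<close> and to
  \<open>\<parallel>\<theta>'\<parallel>\<^sub>2\<close> for most \<open>\<theta>'\<close>; with \<open>p = s / (4 d)\<close> the number of spikes is binomial and lies in
  \<open>[s / 64, s]\<close> with probability at least \<open>3 / 40\<close>, so \<open>\<theta>'\<close> is \<open>s\<close>-sparse with
  \<open>\<parallel>\<theta>'\<parallel>\<^sub>2 \<ge> M \<surd>s / 8\<close>. Besides \<open>p M\<^sup>2 \<le> 1 / 4\<close>, the noise class limits \<open>M\<close> through the
  tail mass \<open>p\<close> at level \<open>M\<close>, which allows \<open>M \<asymp> (d / s)\<^bsup>1/a\<^esup>\<close> for polynomial and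
  \<open>M \<asymp> log\<^bsup>1/a\<^esup>(e d / s)\<close> for sub-exponential tails.
\<close>

section \<open>Binomial tail bounds\<close>

lemma sum_binomial_weights:
  fixes p :: real
  shows "(\<Sum>k\<le>n. real (n choose k) * p ^ k * (1 - p) ^ (n - k)) = 1"
  using binomial_ring[of p "1 - p" n] by (simp add: atLeast0AtMost)

lemma real_Suc_times_binomial:
  "real (Suc n choose Suc k) * real (Suc k) = real (Suc n) * real (n choose k)"
  by (metis Suc_times_binomial_eq of_nat_mult)

lemma sum_binomial_weights_times_k:
  fixes p :: real
  shows "(\<Sum>k\<le>n. real (n choose k) * p ^ k * (1 - p) ^ (n - k) * real k) = real n * p"
proof (cases n)
  case (Suc m)
  have "(\<Sum>k\<le>Suc m. real (Suc m choose k) * p ^ k * (1 - p) ^ (Suc m - k) * real k)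
      = (\<Sum>k\<le>m. real (Suc m choose Suc k) * real (Suc k) * (p * (p ^ k * (1 - p) ^ (m - k))))"
    by (subst sum.atMost_Suc_shift) (simp add: mult_ac)
  also have "\<dots> = real (Suc m) * p * (\<Sum>k\<le>m. real (m choose k) * p ^ k * (1 - p) ^ (m - k))"
    by (simp only: real_Suc_times_binomial sum_distrib_left) (simp add: mult_ac)
  finally show ?thesis
    using Suc sum_binomial_weights[of m p] by simp
qed simp

lemma sum_binomial_weights_times_falling_factorial:
  fixes p :: real
  shows "(\<Sum>k\<le>n. real (n choose k) * p ^ k * (1 - p) ^ (n - k) * (real k * (real k - 1)))
           = real n * (real n - 1) * p\<^sup>2"
proof (cases "n < 2")
  case False
  then obtain m where n: "n = Suc (Suc m)" by (metis add_2_eq_Suc le_Suc_ex not_less)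
  have "(\<Sum>k\<le>n. real (n choose k) * p ^ k * (1 - p) ^ (n - k) * (real k * (real k - 1)))
      = (\<Sum>k\<le>m. real (Suc (Suc m) choose Suc (Suc k)) * real (Suc (Suc k))
                   * real (Suc k) * (p\<^sup>2 * (p ^ k * (1 - p) ^ (m - k))))"
    unfolding n by (subst sum.atMost_Suc_shift, subst sum.atMost_Suc_shift)
      (simp del: binomial_Suc_Suc add: power2_eq_square mult_ac)
  also have "\<dots> = real n * real (Suc m) * p\<^sup>2 * (\<Sum>k\<le>m. real (m choose k) * p ^ k * (1 - p) ^ (m - k))"
  proof -
    have "real (Suc (Suc m) choose Suc (Suc k)) * real (Suc (Suc k)) * real (Suc k)
        = real (Suc (Suc m)) * real (Suc m) * real (m choose k)" for k
      using real_Suc_times_binomial[of "Suc m" "Suc k"] real_Suc_times_binomial[of m k]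
      by (metis mult.assoc)
    then show ?thesis
      unfolding n by (simp only: sum_distrib_left) (simp add: mult_ac)
  qed
  finally show ?thesis
    using sum_binomial_weights[of m p] by (simp add: n)
next
  case True
  then have "n = 0 \<or> n = 1" by auto
  then show ?thesis by auto
qed

lemma expectation_binomial_pmf_real:
  assumes "p \<in> {0..1}"
  shows "measure_pmf.expectation (binomial_pmf n p) real = real n * p"
  using assms sum_binomial_weights_times_k[of n p]
  by (simp add: expectation_binomial_pmf' mult.commute)

lemma variance_binomial_pmf_real:
  assumes "p \<in> {0..1}"
  shows "measure_pmf.variance (binomial_pmf n p) real = real n * p * (1 - p)"
proof -
  let ?b = "\<lambda>k. real (n choose k) * p ^ k * (1 - p) ^ (n - k)"
  have "(\<Sum>k\<le>n. ?b k * (real k - real n * p)\<^sup>2)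
      = (\<Sum>k\<le>n. ?b k * (real k * (real k - 1))) + (1 - 2 * real n * p) * (\<Sum>k\<le>n. ?b k * real k)
          + (real n * p)\<^sup>2 * (\<Sum>k\<le>n. ?b k)"
    by (simp add: sum_distrib_left sum.distrib[symmetric] power2_eq_square algebra_simps)
  also have "\<dots> = real n * p * (1 - p)"
    using sum_binomial_weights_times_falling_factorial[of n p] sum_binomial_weights_times_k[of n p]
      sum_binomial_weights[of n p]
    by (simp add: power2_eq_square algebra_simps)
  finally show ?thesis
    using assms by (subst expectation_binomial_pmf_real) (simp_all add: expectation_binomial_pmf')
qed

lemma binomial_pmf_prob_ge_le:
  assumes "p \<in> {0..1}" "0 < c"
  shows "measure_pmf.prob (binomial_pmf n p) {k. c \<le> real k} \<le> real n * p / c"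
  using integral_Markov_inequality_measure[of "measure_pmf (binomial_pmf n p)" real UNIV c] assms
  by (simp add: expectation_binomial_pmf_real)

lemma binomial_pmf_prob_deviation_le:
  assumes p: "p \<in> {0..1}" and "0 < c"
  shows "measure_pmf.prob (binomial_pmf n p) {k. c \<le> \<bar>real k - real n * p\<bar>} \<le> real n * p * (1 - p) / c\<^sup>2"
  using measure_pmf.Chebyshev_inequality[where M = "binomial_pmf n p", of real c]
    variance_binomial_pmf_real[OF p, of n] \<open>0 < c\<close>
  by (simp add: expectation_binomial_pmf_real[OF p] integrable_binomial_pmf[OF p])

lemma pmf_binomial_pmf_0_le:
  assumes "p \<in> {0..1}"
  shows "pmf (binomial_pmf n p) 0 \<le> exp (- (real n * p))"
proof -
  have "pmf (binomial_pmf n p) 0 = (1 - p) ^ n"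
    using assms by simp
  also have "\<dots> \<le> exp (- p) ^ n"
    using assms by (intro power_mono) (auto simp: exp_ge_add_one_self[of "- p", simplified])
  also have "\<dots> = exp (- (real n * p))"
    by (simp add: exp_of_nat_mult[symmetric])
  finally show ?thesis .
qed

text \<open>Markov bounds the upper tail; Chebyshev bounds the lower tail when \<open>s \<ge> 64\<close>, and for
  smaller \<open>s\<close> the lower tail is the atom at \<open>0\<close>.\<close>
lemma binomial_pmf_prob_between_ge:
  fixes s n :: nat
  assumes s: "1 \<le> s" and sn: "s \<le> n"
  defines "p \<equiv> real s / (4 * real n)"
  shows "measure_pmf.prob (binomial_pmf n p) {k. s \<le> 64 * k \<and> k \<le> s} \<ge> 3/40"
proof -
  let ?B = "binomial_pmf n p"
  have p: "p \<in> {0..1}" using s sn by (auto simp: p_def field_simps)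
  have mean: "real n * p = real s / 4" using s sn by (simp add: p_def field_simps)
  let ?Mid = "{k. s \<le> 64 * k \<and> k \<le> s}" and ?High = "{k. real s + 1 \<le> real k}"
    and ?Low = "{k. 64 * k < s}"
  have "?Mid \<union> ?High \<union> ?Low = UNIV" by auto
  then have "1 = measure ?B (?Mid \<union> ?High \<union> ?Low)" by (simp add: measure_pmf.prob_space)
  also have "\<dots> \<le> measure ?B ?Mid + measure ?B ?High + measure ?B ?Low"
    using measure_Un_le[of "?Mid \<union> ?High" "measure_pmf ?B" ?Low] measure_Un_le[of ?Mid "measure_pmf ?B" ?High]
    by simp
  finally have total: "1 \<le> measure ?B ?Mid + measure ?B ?High + measure ?B ?Low" .
  have high: "measure ?B ?High \<le> real s / 4 / (real s + 1)"
    using binomial_pmf_prob_ge_le[OF p, of "real s + 1" n] by (simp add: mean)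
  show ?thesis
  proof (cases "64 \<le> s")
    case True
    have "measure ?B ?Low \<le> measure ?B {k. real s / 8 \<le> \<bar>real k - real n * p\<bar>}"
      using mean by (intro measure_pmf.finite_measure_mono) auto
    also have "\<dots> \<le> real s / 4 * (1 - p) / (real s / 8)\<^sup>2"
      using binomial_pmf_prob_deviation_le[OF p, of "real s / 8" n] s by (simp add: mean)
    also have "\<dots> \<le> real s / 4 / (real s / 8)\<^sup>2"
      using p by (intro divide_right_mono mult_left_le) auto
    also have "\<dots> \<le> 1/4"
      using True by (simp add: power2_eq_square field_simps)
    finally have low: "measure ?B ?Low \<le> 1/4" .
    have "real s / 4 / (real s + 1) \<le> 1/4" by (simp add: field_simps)
    then show ?thesis
      using total high low by linarith
  next
    case False
    then have "?Low = {0}" using s by auto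
    then have "measure ?B ?Low \<le> exp (- (real s / 4))"
      using pmf_binomial_pmf_0_le[OF p, of n] by (simp add: measure_pmf_single mean)
    also have "\<dots> \<le> 1 / (1 + real s / 4)"
      using exp_ge_add_one_self[of "real s / 4"] by (simp add: exp_minus field_simps)
    finally have low: "measure ?B ?Low \<le> 1 / (1 + real s / 4)" .
    have "0 \<le> (real s - 1) * (9 * real s + 4)" using s by simp
    then have "real s / 4 / (real s + 1) + 1 / (1 + real s / 4) \<le> 37/40"
      using s by (simp add: field_simps algebra_simps)
    then show ?thesis
      using total high low by linarith
  qed
qed

section \<open>Discrete noise distributions\<close>

text \<open>\<open>measure_pmf\<close> carries the discrete \<open>\<sigma>\<close>-algebra, whereas \<open>std_noise\<close> asks for the Borel one.\<close>
definition borel_of_pmf :: "real pmf \<Rightarrow> real measure" where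
  "borel_of_pmf q = distr (measure_pmf q) borel id"

lemma borel_of_pmf_std_noise:
  assumes "finite (set_pmf q)"
    and "measure_pmf.expectation q (\<lambda>x. x) = 0" and "measure_pmf.expectation q (\<lambda>x. x\<^sup>2) = 1"
  shows "borel_of_pmf q \<in> std_noise"
proof -
  have integrable: "integrable (borel_of_pmf q) f" if "f \<in> borel_measurable borel" for f :: "real \<Rightarrow> real"
    unfolding borel_of_pmf_def using that
    by (subst integrable_distr_eq) (auto intro: integrable_measure_pmf_finite[OF assms(1)])
  have expectation: "(\<integral>x. f x \<partial>borel_of_pmf q) = measure_pmf.expectation q f"
    if "f \<in> borel_measurable borel" for f :: "real \<Rightarrow> real"
    unfolding borel_of_pmf_def using that by (subst integral_distr) auto
  have "prob_space (borel_of_pmf q)"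
    unfolding borel_of_pmf_def by (rule measure_pmf.prob_space_distr) simp
  moreover have "sets (borel_of_pmf q) = sets borel"
    by (simp add: borel_of_pmf_def)
  moreover have "integrable (borel_of_pmf q) (\<lambda>x. x)" "integrable (borel_of_pmf q) (\<lambda>x. x\<^sup>2)"
    by (rule integrable; measurable)+
  moreover have "(\<integral>x. x \<partial>borel_of_pmf q) = 0" "(\<integral>x. x\<^sup>2 \<partial>borel_of_pmf q) = 1"
    using assms(2,3) by (subst expectation; measurable)+
  ultimately show ?thesis
    unfolding std_noise_def by blast
qed

lemma measure_borel_of_pmf_tail:
  "measure (borel_of_pmf q) {x. \<bar>x\<bar> > t} = measure_pmf.prob q {x. \<bar>x\<bar> > t}"
  unfolding borel_of_pmf_def by (subst measure_distr) (auto simp: vimage_def)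

definition rademacher_pmf :: "real pmf" where
  "rademacher_pmf = pmf_of_set {1, -1}"

lemma pmf_rademacher_pmf: "pmf rademacher_pmf x = (if x = 1 \<or> x = -1 then 1/2 else 0)"
  by (simp add: rademacher_pmf_def)

lemma set_rademacher_pmf [simp]: "set_pmf rademacher_pmf = {1, -1}"
  by (simp add: rademacher_pmf_def)

lemma rademacher_std_noise: "borel_of_pmf rademacher_pmf \<in> std_noise"
  by (rule borel_of_pmf_std_noise) (simp_all add: rademacher_pmf_def integral_pmf_of_set)

lemma rademacher_tail: "1 \<le> t \<Longrightarrow> measure (borel_of_pmf rademacher_pmf) {x. \<bar>x\<bar> > t} = 0"
  by (simp add: measure_borel_of_pmf_tail rademacher_pmf_def measure_pmf_of_set)

definition tail_class :: "(real \<Rightarrow> real) \<Rightarrow> real measure set" where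
  "tail_class bnd = {P \<in> std_noise. \<forall>t\<ge>2. measure P {x. \<bar>x\<bar> > t} \<le> bnd t}"

lemma rademacher_tail_class:
  "(\<And>t. 2 \<le> t \<Longrightarrow> 0 \<le> bnd t) \<Longrightarrow> borel_of_pmf rademacher_pmf \<in> tail_class bnd"
  using rademacher_std_noise rademacher_tail unfolding tail_class_def by auto

definition spike_pmf :: "real \<Rightarrow> real \<Rightarrow> real pmf" where
  "spike_pmf p M = pmf_of_list [(0, 1 - p), (M, p / 2), (- M, p / 2)]"

lemma spike_pmf_wf:
  "0 \<le> (p::real) \<Longrightarrow> p \<le> 1 \<Longrightarrow> pmf_of_list_wf [(0, 1 - p), (M, p / 2), (- M, p / 2)]"
  by (rule pmf_of_list_wfI) auto

lemma pmf_spike_pmf: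
  assumes "0 \<le> p" "p \<le> 1" "0 < M"
  shows "pmf (spike_pmf p M) x = (if x = 0 then 1 - p else if x = M \<or> x = - M then p / 2 else 0)"
  using assms unfolding spike_pmf_def by (subst pmf_pmf_of_list[OF spike_pmf_wf]) auto

lemma set_spike_pmf:
  assumes "0 < p" "p < 1" "0 < M"
  shows "set_pmf (spike_pmf p M) = {0, M, - M}"
  using assms by (auto simp: set_pmf_eq pmf_spike_pmf)

lemma map_nonzero_spike_pmf:
  assumes "0 \<le> p" "p \<le> 1" "0 < M"
  shows "map_pmf (\<lambda>x. x \<noteq> 0) (spike_pmf p M) = bernoulli_pmf p"
proof (rule pmf_eqI)
  fix b :: bool
  have "pmf (map_pmf (\<lambda>x. x \<noteq> 0) (spike_pmf p M)) b = measure (spike_pmf p M) {x. (x \<noteq> 0) = b}"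
    by (simp add: pmf_map vimage_def)
  also have "\<dots> = (if b then p else 1 - p)"
    unfolding spike_pmf_def using assms by (subst measure_pmf_of_list[OF spike_pmf_wf]) auto
  finally show "pmf (map_pmf (\<lambda>x. x \<noteq> 0) (spike_pmf p M)) b = pmf (bernoulli_pmf p) b"
    using assms by simp
qed

section \<open>The spike prior\<close>

definition spike_prior :: "nat \<Rightarrow> real \<Rightarrow> real \<Rightarrow> (nat \<Rightarrow> real) pmf" where
  "spike_prior d p M = Pi_pmf {..<d} 0 (\<lambda>_. spike_pmf p M)"

abbreviation spike_patterns :: "nat \<Rightarrow> real \<Rightarrow> (nat \<Rightarrow> real) set" where
  "spike_patterns d M \<equiv> PiE_dflt {..<d} 0 (\<lambda>_. {0, M, - M})"

lemma map_card_nonzero_spike_prior: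
  assumes "0 \<le> p" "p \<le> 1" "0 < M"
  shows "map_pmf (\<lambda>\<theta>. card {i\<in>{..<d}. \<theta> i \<noteq> 0}) (spike_prior d p M) = binomial_pmf d p"
proof -
  have "binomial_pmf d p = map_pmf (\<lambda>f. card {i\<in>{..<d}. f i}) (Pi_pmf {..<d} False (\<lambda>_. bernoulli_pmf p))"
    using assms by (intro binomial_pmf_altdef') auto
  also have "Pi_pmf {..<d} False (\<lambda>_. bernoulli_pmf p)
      = Pi_pmf {..<d} False (\<lambda>_. map_pmf (\<lambda>x. x \<noteq> 0) (spike_pmf p M))"
    using map_nonzero_spike_pmf[OF assms] by simp
  also have "\<dots> = map_pmf (\<lambda>\<theta>. (\<lambda>x. x \<noteq> 0) \<circ> \<theta>) (spike_prior d p M)"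
    unfolding spike_prior_def by (rule Pi_pmf_map) auto
  finally show ?thesis by (simp add: pmf.map_comp o_def)
qed

lemma set_spike_prior:
  assumes "0 < p" "p < 1" "0 < M"
  shows "set_pmf (spike_prior d p M) = spike_patterns d M"
  using set_spike_pmf[OF assms] by (simp add: spike_prior_def set_Pi_pmf o_def)

lemma pmf_spike_prior:
  assumes "\<theta> \<in> spike_patterns d M"
  shows "pmf (spike_prior d p M) \<theta> = (\<Prod>i<d. pmf (spike_pmf p M) (\<theta> i))"
proof -
  have "\<forall>i. i \<notin> {..<d} \<longrightarrow> \<theta> i = 0"
    using assms unfolding PiE_dflt_def by blast
  then show ?thesis
    unfolding spike_prior_def pmf_Pi[OF finite_lessThan] by (rule if_P)
qed

lemma l2norm_spike_pattern:
  assumes "\<theta> \<in> spike_patterns d M" "0 < M"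
  shows "l2norm d \<theta> = M * sqrt (card {i\<in>{..<d}. \<theta> i \<noteq> 0})"
proof -
  have "(\<theta> i)\<^sup>2 = (if \<theta> i \<noteq> 0 then M\<^sup>2 else 0)" if "i \<in> {..<d}" for i
  proof -
    have "\<theta> i \<in> {0, M, - M}"
      using assms(1) that unfolding PiE_dflt_def by blast
    then show ?thesis by auto
  qed
  then have "(\<Sum>i<d. (\<theta> i)\<^sup>2) = (\<Sum>i<d. if \<theta> i \<noteq> 0 then M\<^sup>2 else 0)"
    by (rule sum.cong[OF refl])
  also have "\<dots> = M\<^sup>2 * card {i\<in>{..<d}. \<theta> i \<noteq> 0}"
    by (simp add: sum.inter_filter[symmetric])
  finally show ?thesis
    using assms(2) by (simp add: l2norm_def real_sqrt_mult)
qed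

lemma spike_pattern_sparse:
  assumes "\<theta> \<in> spike_patterns d M" "card {i\<in>{..<d}. \<theta> i \<noteq> 0} \<le> s"
  shows "\<theta> \<in> sparse_set d s"
proof -
  have "\<forall>i\<ge>d. \<theta> i = 0"
    using assms(1) unfolding PiE_dflt_def by auto
  moreover have "{i. i < d \<and> \<theta> i \<noteq> 0} = {i\<in>{..<d}. \<theta> i \<noteq> 0}"
    by auto
  ultimately show ?thesis
    using assms(2) unfolding sparse_set_def by simp
qed

lemma sum_singletons_le_nn_integral:
  assumes "finite F" and "\<And>y. y \<in> F \<Longrightarrow> {y} \<in> sets N"
  shows "(\<Sum>y\<in>F. f y * emeasure N {y}) \<le> (\<integral>\<^sup>+ x. f x \<partial>N)"
proof -
  have "(\<Sum>y\<in>F. f y * emeasure N {y}) = (\<integral>\<^sup>+ x. (\<Sum>y\<in>F. f y * indicator {y} x) \<partial>N)"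
    using assms(2) by (subst nn_integral_sum) (auto simp: nn_integral_cmult_indicator)
  also have "\<dots> \<le> (\<integral>\<^sup>+ x. f x \<partial>N)"
  proof (rule nn_integral_mono)
    fix x
    have "(\<Sum>y\<in>F. f y * indicator {y} x) = (if x \<in> F then f x else 0)"
      using assms(1) by (simp add: indicator_def if_distrib sum.delta' cong: if_cong)
    then show "(\<Sum>y\<in>F. f y * indicator {y} x) \<le> f x" by simp
  qed
  finally show ?thesis .
qed

lemma obs_law_singleton:
  assumes "0 < \<sigma>" and y: "y \<in> PiE {..<d} (\<lambda>_. UNIV)"
  shows "{y} \<in> sets (obs_law d \<theta> \<sigma> (borel_of_pmf q))"
    and "emeasure (obs_law d \<theta> \<sigma> (borel_of_pmf q)) {y} = (\<Prod>i<d. ennreal (pmf q ((y i - \<theta> i) / \<sigma>)))"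
proof -
  let ?N = "\<lambda>i. distr (borel_of_pmf q) borel (\<lambda>x. \<theta> i + \<sigma> * x)"
  have y_PiE: "{y} = PiE {..<d} (\<lambda>i. {y i})" using y by (simp add: PiE_singleton PiE_iff)
  show "{y} \<in> sets (obs_law d \<theta> \<sigma> (borel_of_pmf q))"
    unfolding obs_law_def y_PiE by (intro sets_PiM_I_finite) auto
  have "prob_space (?N i)" for i
    unfolding borel_of_pmf_def by (intro prob_space.prob_space_distr measure_pmf.prob_space_distr) auto
  then interpret product_sigma_finite ?N
    unfolding product_sigma_finite_def by (auto intro: prob_space_imp_sigma_finite)
  have "emeasure (obs_law d \<theta> \<sigma> (borel_of_pmf q)) {y} = (\<Prod>i<d. emeasure (?N i) {y i})"
    unfolding obs_law_def y_PiE by (subst emeasure_PiM) auto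
  also have "\<dots> = (\<Prod>i<d. ennreal (pmf q ((y i - \<theta> i) / \<sigma>)))"
  proof (rule prod.cong[OF refl])
    fix i
    have "(\<lambda>x. \<theta> i + \<sigma> * x) -` {y i} = {(y i - \<theta> i) / \<sigma>}"
      using assms(1) by (auto simp: field_simps)
    then show "emeasure (?N i) {y i} = ennreal (pmf q ((y i - \<theta> i) / \<sigma>))"
      unfolding borel_of_pmf_def by (subst emeasure_distr) (auto simp: emeasure_distr emeasure_pmf_single)
  qed
  finally show "emeasure (obs_law d \<theta> \<sigma> (borel_of_pmf q)) {y} = (\<Prod>i<d. ennreal (pmf q ((y i - \<theta> i) / \<sigma>)))" .
qed

lemma nn_integral_obs_law_ge_sum:
  assumes "0 < \<sigma>" "finite Y" "Y \<subseteq> PiE {..<d} (\<lambda>_. UNIV)"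
  shows "(\<Sum>y\<in>Y. f y * (\<Prod>i<d. ennreal (pmf q ((y i - \<theta> i) / \<sigma>))))
           \<le> (\<integral>\<^sup>+ y. f y \<partial>obs_law d \<theta> \<sigma> (borel_of_pmf q))"
proof -
  have "(\<Sum>y\<in>Y. f y * (\<Prod>i<d. ennreal (pmf q ((y i - \<theta> i) / \<sigma>))))
      = (\<Sum>y\<in>Y. f y * emeasure (obs_law d \<theta> \<sigma> (borel_of_pmf q)) {y})"
    using assms by (intro sum.cong refl) (auto simp: obs_law_singleton(2))
  also have "\<dots> \<le> (\<integral>\<^sup>+ y. f y \<partial>obs_law d \<theta> \<sigma> (borel_of_pmf q))"
    using assms by (intro sum_singletons_le_nn_integral) (auto intro: obs_law_singleton(1))
  finally show ?thesis .
qed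

abbreviation sign_vectors :: "nat \<Rightarrow> (nat \<Rightarrow> real) set" where
  "sign_vectors d \<equiv> PiE {..<d} (\<lambda>_. {1, -1})"

definition signed_shift :: "nat \<Rightarrow> real \<Rightarrow> (nat \<Rightarrow> real) \<Rightarrow> (nat \<Rightarrow> real) \<Rightarrow> nat \<Rightarrow> real" where
  "signed_shift d \<delta> \<theta> \<epsilon> = (\<lambda>i\<in>{..<d}. \<theta> i + \<delta> * \<epsilon> i)"

lemma signed_shift_PiE: "signed_shift d \<delta> \<theta> \<epsilon> \<in> PiE {..<d} (\<lambda>_. UNIV)"
  by (simp add: signed_shift_def)

lemma sum_sign_vectors_uniform: "(\<Sum>\<epsilon>\<in>sign_vectors d. ennreal ((1/2) ^ d)) = 1"
proof -
  have "card (sign_vectors d) = 2 ^ d"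
    by (simp add: card_PiE numeral_2_eq_2)
  then show ?thesis
    by (simp add: ennreal_of_nat_eq_real_of_nat ennreal_mult'[symmetric] power_one_over)
qed

lemma inj_on_signed_shift:
  assumes "0 < \<delta>"
  shows "inj_on (signed_shift d \<delta> \<theta>) (sign_vectors d)"
proof (rule inj_onI)
  fix \<epsilon> \<epsilon>' assume \<epsilon>: "\<epsilon> \<in> sign_vectors d" and \<epsilon>': "\<epsilon>' \<in> sign_vectors d"
    and eq: "signed_shift d \<delta> \<theta> \<epsilon> = signed_shift d \<delta> \<theta> \<epsilon>'"
  show "\<epsilon> = \<epsilon>'"
  proof (rule PiE_ext[OF \<epsilon> \<epsilon>'])
    fix i assume "i \<in> {..<d}"
    then have "\<theta> i + \<delta> * \<epsilon> i = \<theta> i + \<delta> * \<epsilon>' i"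
      using fun_cong[OF eq, of i] by (simp add: signed_shift_def)
    then show "\<epsilon> i = \<epsilon>' i" using assms by simp
  qed
qed

lemma nn_integral_obs_rademacher_ge:
  assumes "0 < \<delta>"
  shows "(\<Sum>\<epsilon>\<in>sign_vectors d. ennreal ((1/2) ^ d) * f (signed_shift d \<delta> \<theta> \<epsilon>))
           \<le> (\<integral>\<^sup>+ y. f y \<partial>obs_law d \<theta> \<delta> (borel_of_pmf rademacher_pmf))"
proof -
  have weight: "(\<Prod>i<d. ennreal (pmf rademacher_pmf ((signed_shift d \<delta> \<theta> \<epsilon> i - \<theta> i) / \<delta>)))
      = ennreal ((1/2) ^ d)" if "\<epsilon> \<in> sign_vectors d" for \<epsilon>
  proof -
    have "(\<Prod>i<d. ennreal (pmf rademacher_pmf ((signed_shift d \<delta> \<theta> \<epsilon> i - \<theta> i) / \<delta>)))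
        = (\<Prod>i<d. ennreal (1/2))"
      using that assms by (intro prod.cong) (auto simp: signed_shift_def pmf_rademacher_pmf PiE_iff)
    also have "\<dots> = ennreal (\<Prod>i<d. 1/2)"
      by (rule prod_ennreal) simp
    finally show ?thesis by simp
  qed
  have "(\<Sum>\<epsilon>\<in>sign_vectors d. ennreal ((1/2) ^ d) * f (signed_shift d \<delta> \<theta> \<epsilon>))
      = (\<Sum>y\<in>signed_shift d \<delta> \<theta> ` sign_vectors d.
           f y * (\<Prod>i<d. ennreal (pmf rademacher_pmf ((y i - \<theta> i) / \<delta>))))"
    using weight by (subst sum.reindex[OF inj_on_signed_shift[OF assms]]) (simp_all add: mult.commute)
  also have "\<dots> \<le> (\<integral>\<^sup>+ y. f y \<partial>obs_law d \<theta> \<delta> (borel_of_pmf rademacher_pmf))"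
    using assms by (intro nn_integral_obs_law_ge_sum finite_imageI finite_PiE image_subsetI signed_shift_PiE) auto
  finally show ?thesis .
qed

section \<open>The two-point mixture argument\<close>

lemma loss_mono: "l \<in> loss_class \<Longrightarrow> 0 \<le> x \<Longrightarrow> x \<le> y \<Longrightarrow> l x \<le> l y"
  unfolding loss_class_def by blast

lemma loss_nonneg: "l \<in> loss_class \<Longrightarrow> 0 \<le> x \<Longrightarrow> 0 \<le> l x"
  unfolding loss_class_def by blast

text \<open>No value \<open>t\<close> is close to both \<open>0\<close> and \<open>n\<close>; dividing by \<open>\<delta> \<le> 1\<close> only helps.\<close>
lemma loss_two_point:
  assumes l: "l \<in> loss_class" and "0 \<le> x" "0 < r" "0 < \<delta>" "\<delta> \<le> 1" and x: "x \<le> r * n / 2"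
  shows "l x \<le> l (r * \<bar>t\<bar>) + l (r * \<bar>(t - n) / \<delta>\<bar>)"
proof (cases "\<bar>t\<bar> \<ge> n / 2")
  case True
  then have "r * (n / 2) \<le> r * \<bar>t\<bar>"
    using \<open>0 < r\<close> by (intro mult_left_mono) auto
  then have "x \<le> r * \<bar>t\<bar>"
    using x by linarith
  then have "l x \<le> l (r * \<bar>t\<bar>)"
    by (rule loss_mono[OF l \<open>0 \<le> x\<close>])
  moreover have "0 \<le> l (r * \<bar>(t - n) / \<delta>\<bar>)"
    using \<open>0 < r\<close> by (intro loss_nonneg[OF l]) simp
  ultimately show ?thesis by linarith
next
  case False
  then have "n / 2 \<le> \<bar>t - n\<bar>" by linarith
  also have "\<dots> \<le> \<bar>(t - n) / \<delta>\<bar>"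
    using \<open>0 < \<delta>\<close> \<open>\<delta> \<le> 1\<close> by (simp add: abs_divide le_divide_eq mult_left_le)
  finally have "r * (n / 2) \<le> r * \<bar>(t - n) / \<delta>\<bar>"
    using \<open>0 < r\<close> by (intro mult_left_mono) auto
  then have "x \<le> r * \<bar>(t - n) / \<delta>\<bar>"
    using x by linarith
  then have "l x \<le> l (r * \<bar>(t - n) / \<delta>\<bar>)"
    by (rule loss_mono[OF l \<open>0 \<le> x\<close>])
  moreover have "0 \<le> l (r * \<bar>t\<bar>)"
    using \<open>0 < r\<close> by (intro loss_nonneg[OF l]) simp
  ultimately show ?thesis by linarith
qed

lemma risk_le_worst_risk:
  "P \<in> \<G> \<Longrightarrow> 0 < \<sigma> \<Longrightarrow> \<theta> \<in> sparse_set d s \<Longrightarrow> risk l r d T \<theta> \<sigma> P \<le> worst_risk l r d s \<G> T"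
  unfolding worst_risk_def by (rule Sup_upper) blast

lemma ennreal_half_mult_le:
  fixes a q P :: real
  assumes "0 \<le> a" "q \<le> P" "ennreal a * ennreal P \<le> 2 * W"
  shows "ennreal (a * q / 2) \<le> W"
proof (cases "q \<le> 0")
  case False
  have "2 * ennreal (a * q / 2) = ennreal (2 * (a * q / 2))"
    using assms(1) False by (subst ennreal_mult) simp_all
  also have "2 * (a * q / 2) = a * q"
    by simp
  also have "\<dots> \<le> ennreal (a * P)"
    using assms(1,2) by (intro ennreal_leI mult_left_mono)
  also have "\<dots> = ennreal a * ennreal P"
    using assms(1,2) False by (intro ennreal_mult) auto
  finally have "2 * ennreal (a * q / 2) \<le> 2 * W"
    using assms(3) by (rule order.trans)
  then show ?thesis
    using ennreal_mult_le_mult_iff[of 2] by simp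
next
  case True
  then have "a * q / 2 \<le> 0"
    using assms(1) by (simp add: mult_nonneg_nonpos)
  then show ?thesis
    by (simp add: ennreal_neg)
qed

text \<open>Under this noise the observation at \<open>\<theta> = 0\<close>, \<open>\<sigma> = 1\<close> is the mixture over
  \<open>\<theta> \<sim> spike_prior\<close> of the observations at \<open>\<theta>\<close>, \<open>\<sigma> = \<delta>\<close> with Rademacher noise.\<close>
definition spike_rademacher_pmf :: "real \<Rightarrow> real \<Rightarrow> real \<Rightarrow> real pmf" where
  "spike_rademacher_pmf p M \<delta> =
     map_pmf (\<lambda>(t, e). t + \<delta> * e) (pair_pmf (spike_pmf p M) rademacher_pmf)"

locale spike_rademacher =
  fixes p M \<delta> :: real
  assumes p_pos: "0 < p" and p_less_1: "p < 1" and M_pos: "0 < M"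
    and \<delta>_pos: "0 < \<delta>" and \<delta>_less_1: "\<delta> < 1" and M_neq: "M \<noteq> \<delta>" "M \<noteq> 2 * \<delta>"
begin

lemma set_spike [simp]: "set_pmf (spike_pmf p M) = {0, M, - M}"
  using p_pos p_less_1 M_pos by (rule set_spike_pmf)

lemma spike_rademacher_decomp_unique:
  assumes "t \<in> {0, M, - M}" "t' \<in> {0, M, - M}" "e \<in> {1, -1}" "e' \<in> {1, -1}"
    and "t + \<delta> * e = t' + \<delta> * e'"
  shows "t = t' \<and> e = e'"
  using assms M_pos \<delta>_pos M_neq by (elim insertE emptyE) (simp_all add: algebra_simps)

lemma pmf_spike_rademacher_pmf:
  assumes "t \<in> {0, M, - M}" "e \<in> {1, -1}"
  shows "pmf (spike_rademacher_pmf p M \<delta>) (t + \<delta> * e) = pmf (spike_pmf p M) t * pmf rademacher_pmf e"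
proof -
  define f where "f = (\<lambda>(t, e). t + \<delta> * (e::real))"
  let ?P = "pair_pmf (spike_pmf p M) rademacher_pmf"
  have "inj_on f ({0, M, - M} \<times> {1, -1})"
  proof (rule inj_onI)
    fix x y assume "x \<in> {0, M, - M} \<times> {1, -1}" "y \<in> {0, M, - M} \<times> {1, -1}" "f x = f y"
    then show "x = y"
      using spike_rademacher_decomp_unique[of "fst x" "fst y" "snd x" "snd y"]
      unfolding f_def mem_Times_iff case_prod_beta prod_eq_iff by blast
  qed
  moreover have "(t, e) \<in> {0, M, - M} \<times> {1, -1}"
    using assms by (simp only: mem_Times_iff fst_conv snd_conv)
  ultimately have "pmf (map_pmf f ?P) (f (t, e)) = pmf ?P (t, e)"
    by (intro pmf_map_inj) (simp_all only: set_pair_pmf set_spike set_rademacher_pmf)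
  then show ?thesis
    unfolding spike_rademacher_pmf_def pmf_pair f_def prod.case .
qed

lemma expectation_spike_rademacher_pmf_id:
  "measure_pmf.expectation (spike_rademacher_pmf p M \<delta>) (\<lambda>x. x) = 0"
  unfolding spike_rademacher_pmf_def integral_map_pmf
  using p_pos p_less_1 M_pos
  by (subst integral_measure_pmf_real[where A = "{0, M, - M} \<times> {1, -1}"])
     (auto simp: pmf_pair pmf_spike_pmf pmf_rademacher_pmf add_divide_distrib[symmetric] algebra_simps)

lemma expectation_spike_rademacher_pmf_square:
  "measure_pmf.expectation (spike_rademacher_pmf p M \<delta>) (\<lambda>x. x\<^sup>2) = p * M\<^sup>2 + \<delta>\<^sup>2"
  unfolding spike_rademacher_pmf_def integral_map_pmf
  using p_pos p_less_1 M_pos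
  by (subst integral_measure_pmf_real[where A = "{0, M, - M} \<times> {1, -1}"])
     (auto simp: pmf_pair pmf_spike_pmf pmf_rademacher_pmf power2_eq_square algebra_simps)

lemma spike_rademacher_std_noise:
  assumes "p * M\<^sup>2 + \<delta>\<^sup>2 = 1"
  shows "borel_of_pmf (spike_rademacher_pmf p M \<delta>) \<in> std_noise"
proof (rule borel_of_pmf_std_noise)
  show "finite (set_pmf (spike_rademacher_pmf p M \<delta>))"
    by (simp add: spike_rademacher_pmf_def)
  show "measure_pmf.expectation (spike_rademacher_pmf p M \<delta>) (\<lambda>x. x) = 0"
    by (rule expectation_spike_rademacher_pmf_id)
  show "measure_pmf.expectation (spike_rademacher_pmf p M \<delta>) (\<lambda>x. x\<^sup>2) = 1"
    using assms by (simp only: expectation_spike_rademacher_pmf_square)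
qed

lemma spike_rademacher_tail:
  assumes "1 \<le> t"
  shows "measure (borel_of_pmf (spike_rademacher_pmf p M \<delta>)) {x. \<bar>x\<bar> > t}
           \<le> (if t < M + \<delta> then p else 0)"
proof -
  let ?P = "pair_pmf (spike_pmf p M) rademacher_pmf"
  let ?S = "{x. t < \<bar>fst x + \<delta> * snd x\<bar>} \<inter> set_pmf ?P"
  have support: "t' \<in> {0, M, - M}" "e \<in> {1, -1}" "t < \<bar>t' + \<delta> * e\<bar>"
    if "(t', e) \<in> ?S" for t' e
    using that by auto
  have bound: "\<bar>t' + \<delta> * e\<bar> \<le> \<bar>t'\<bar> + \<delta>" if "e \<in> {1, -1}" for t' e
    using that \<delta>_pos by auto
  have "measure (borel_of_pmf (spike_rademacher_pmf p M \<delta>)) {x. \<bar>x\<bar> > t}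
      = measure ?P {x. t < \<bar>fst x + \<delta> * snd x\<bar>}"
    by (simp add: measure_borel_of_pmf_tail spike_rademacher_pmf_def vimage_def case_prod_beta')
  also have "\<dots> = measure ?P ?S"
    by (rule measure_Int_set_pmf[symmetric])
  also have "\<dots> \<le> (if t < M + \<delta> then p else 0)"
  proof (cases "t < M + \<delta>")
    case True
    have "?S \<subseteq> {M, - M} \<times> UNIV"
    proof
      fix x assume x: "x \<in> ?S"
      obtain t' e where x_eq: "x = (t', e)" by fastforce
      have "t' \<noteq> 0"
        using support[OF x[unfolded x_eq]] assms \<delta>_less_1 \<delta>_pos by auto
      then show "x \<in> {M, - M} \<times> UNIV"
        using support(1)[OF x[unfolded x_eq]] x_eq by auto
    qed
    then have "measure ?P ?S \<le> measure ?P ({M, - M} \<times> UNIV)"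
      by (intro measure_pmf.finite_measure_mono) simp_all
    also have "\<dots> = measure (spike_pmf p M) {M, - M}"
      by (metis map_fst_pair_pmf measure_map_pmf vimage_fst)
    also have "\<dots> = p"
      using p_pos p_less_1 M_pos by (simp add: measure_measure_pmf_finite pmf_spike_pmf)
    finally show ?thesis using True by simp
  next
    case False
    have "?S = {}"
    proof (rule equals0I)
      fix x assume x: "x \<in> ?S"
      obtain t' e where x_eq: "x = (t', e)" by fastforce
      have "\<bar>t'\<bar> \<le> M"
        using support(1)[OF x[unfolded x_eq]] M_pos by auto
      then show False
        using support(2,3)[OF x[unfolded x_eq]] bound[of e t'] False by linarith
    qed
    then show ?thesis using p_pos by simp
  qed
  finally show ?thesis .
qed

lemma spike_rademacher_tail_class:
  assumes "p * M\<^sup>2 + \<delta>\<^sup>2 = 1" and bnd: "\<And>t. 2 \<le> t \<Longrightarrow> 0 \<le> bnd t"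
    and tail: "\<And>t. 2 \<le> t \<Longrightarrow> t < M + \<delta> \<Longrightarrow> p \<le> bnd t"
  shows "borel_of_pmf (spike_rademacher_pmf p M \<delta>) \<in> tail_class bnd"
  unfolding tail_class_def
proof (intro CollectI conjI allI impI)
  show "borel_of_pmf (spike_rademacher_pmf p M \<delta>) \<in> std_noise"
    using assms(1) by (rule spike_rademacher_std_noise)
  fix t :: real assume t: "2 \<le> t"
  then show "measure (borel_of_pmf (spike_rademacher_pmf p M \<delta>)) {x. \<bar>x\<bar> > t} \<le> bnd t"
    using spike_rademacher_tail[of t] bnd[OF t] tail[OF t] by (auto split: if_splits)
qed

lemma inj_on_signed_shift_spike_patterns:
  "inj_on (\<lambda>(\<theta>, \<epsilon>). signed_shift d \<delta> \<theta> \<epsilon>) (spike_patterns d M \<times> sign_vectors d)"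
proof (rule inj_onI, clarify)
  fix \<theta> \<epsilon> \<theta>' \<epsilon>'
  assume \<theta>: "\<theta> \<in> spike_patterns d M" "\<theta>' \<in> spike_patterns d M"
    and \<epsilon>: "\<epsilon> \<in> sign_vectors d" "\<epsilon>' \<in> sign_vectors d"
    and eq: "signed_shift d \<delta> \<theta> \<epsilon> = signed_shift d \<delta> \<theta>' \<epsilon>'"
  have coord: "\<theta> i = \<theta>' i \<and> \<epsilon> i = \<epsilon>' i" if "i \<in> {..<d}" for i
  proof (rule spike_rademacher_decomp_unique)
    show "\<theta> i \<in> {0, M, - M}" "\<theta>' i \<in> {0, M, - M}"
      using \<theta> that unfolding PiE_dflt_def by blast+
    show "\<epsilon> i \<in> {1, -1}" "\<epsilon>' i \<in> {1, -1}"
      using \<epsilon> that by blast+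
    show "\<theta> i + \<delta> * \<epsilon> i = \<theta>' i + \<delta> * \<epsilon>' i"
      using fun_cong[OF eq, of i] that by (simp add: signed_shift_def)
  qed
  have "\<theta> = \<theta>'"
  proof
    fix i show "\<theta> i = \<theta>' i"
      using coord[of i] \<theta> unfolding PiE_dflt_def by (cases "i \<in> {..<d}") auto
  qed
  moreover have "\<epsilon> = \<epsilon>'"
    using coord by (intro PiE_ext[OF \<epsilon>]) blast
  ultimately show "\<theta> = \<theta>' \<and> \<epsilon> = \<epsilon>'" ..
qed

lemma prod_pmf_spike_rademacher_signed_shift:
  assumes \<theta>: "\<theta> \<in> spike_patterns d M" and \<epsilon>: "\<epsilon> \<in> sign_vectors d"
  shows "(\<Prod>i<d. ennreal (pmf (spike_rademacher_pmf p M \<delta>) (signed_shift d \<delta> \<theta> \<epsilon> i)))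
           = ennreal (pmf (spike_prior d p M) \<theta>) * ennreal ((1/2) ^ d)"
proof -
  have "(\<Prod>i<d. ennreal (pmf (spike_rademacher_pmf p M \<delta>) (signed_shift d \<delta> \<theta> \<epsilon> i)))
      = (\<Prod>i<d. ennreal (pmf (spike_pmf p M) (\<theta> i) * (1/2)))"
  proof (rule prod.cong[OF refl])
    fix i assume i: "i \<in> {..<d}"
    then have "\<theta> i \<in> {0, M, - M}" "\<epsilon> i \<in> {1, -1}"
      using \<theta> \<epsilon> unfolding PiE_dflt_def by blast+
    then show "ennreal (pmf (spike_rademacher_pmf p M \<delta>) (signed_shift d \<delta> \<theta> \<epsilon> i))
        = ennreal (pmf (spike_pmf p M) (\<theta> i) * (1/2))"
      using i by (auto simp: signed_shift_def pmf_spike_rademacher_pmf pmf_rademacher_pmf)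
  qed
  also have "\<dots> = ennreal (\<Prod>i<d. pmf (spike_pmf p M) (\<theta> i) * (1/2))"
    by (rule prod_ennreal) simp
  also have "(\<Prod>i<d. pmf (spike_pmf p M) (\<theta> i) * (1/2)) = (\<Prod>i<d. pmf (spike_pmf p M) (\<theta> i)) * (1/2) ^ d"
    by (simp only: prod.distrib prod_constant card_lessThan)
  also have "ennreal \<dots> = ennreal (pmf (spike_prior d p M) \<theta>) * ennreal ((1/2) ^ d)"
    using \<theta> by (simp add: pmf_spike_prior ennreal_mult prod_nonneg)
  finally show ?thesis .
qed

lemma nn_integral_obs_spike_rademacher_ge:
  "(\<Sum>\<theta>\<in>spike_patterns d M. ennreal (pmf (spike_prior d p M) \<theta>)
       * (\<Sum>\<epsilon>\<in>sign_vectors d. ennreal ((1/2) ^ d) * f (signed_shift d \<delta> \<theta> \<epsilon>)))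
     \<le> (\<integral>\<^sup>+ y. f y \<partial>obs_law d (\<lambda>_. 0) 1 (borel_of_pmf (spike_rademacher_pmf p M \<delta>)))"
proof -
  let ?y = "\<lambda>(\<theta>, \<epsilon>). signed_shift d \<delta> \<theta> \<epsilon>" and ?Z = "spike_patterns d M \<times> sign_vectors d"
  let ?w = "\<lambda>\<theta>. ennreal (pmf (spike_prior d p M) \<theta>) * ennreal ((1/2) ^ d)"
  have "(\<Sum>\<theta>\<in>spike_patterns d M. ennreal (pmf (spike_prior d p M) \<theta>)
          * (\<Sum>\<epsilon>\<in>sign_vectors d. ennreal ((1/2) ^ d) * f (signed_shift d \<delta> \<theta> \<epsilon>)))
      = (\<Sum>(\<theta>, \<epsilon>)\<in>?Z. f (signed_shift d \<delta> \<theta> \<epsilon>) * ?w \<theta>)"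
    by (simp add: sum.cartesian_product[symmetric] sum_distrib_left mult_ac)
  also have "\<dots> = (\<Sum>z\<in>?Z. f (?y z)
      * (\<Prod>i<d. ennreal (pmf (spike_rademacher_pmf p M \<delta>) ((?y z i - 0) / 1))))"
    using prod_pmf_spike_rademacher_signed_shift by (intro sum.cong) auto
  also have "\<dots> = (\<Sum>y\<in>?y ` ?Z. f y
      * (\<Prod>i<d. ennreal (pmf (spike_rademacher_pmf p M \<delta>) ((y i - 0) / 1))))"
    by (rule sum.reindex[OF inj_on_signed_shift_spike_patterns, symmetric, unfolded comp_def])
  also have "\<dots> \<le> (\<integral>\<^sup>+ y. f y \<partial>obs_law d (\<lambda>_. 0) 1 (borel_of_pmf (spike_rademacher_pmf p M \<delta>)))"
  proof (intro nn_integral_obs_law_ge_sum finite_imageI finite_cartesian_product finite_PiE_dflt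
      finite_PiE image_subsetI)
    fix z show "?y z \<in> PiE {..<d} (\<lambda>_. UNIV)"
      by (cases z) (simp only: prod.case signed_shift_PiE)
  qed simp_all
  finally show ?thesis .
qed

lemma mixture_risk_bound:
  fixes F0 :: "(nat \<Rightarrow> real) \<Rightarrow> ennreal" and F1 :: "(nat \<Rightarrow> real) \<Rightarrow> (nat \<Rightarrow> real) \<Rightarrow> ennreal"
  assumes A: "A \<subseteq> spike_patterns d M" and split: "\<And>\<theta> y. \<theta> \<in> A \<Longrightarrow> c \<le> F0 y + F1 \<theta> y"
  shows "c * (\<Sum>\<theta>\<in>A. ennreal (pmf (spike_prior d p M) \<theta>))
    \<le> (\<integral>\<^sup>+ y. F0 y \<partial>obs_law d (\<lambda>_. 0) 1 (borel_of_pmf (spike_rademacher_pmf p M \<delta>)))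
      + (\<Sum>\<theta>\<in>A. ennreal (pmf (spike_prior d p M) \<theta>)
           * (\<integral>\<^sup>+ y. F1 \<theta> y \<partial>obs_law d \<theta> \<delta> (borel_of_pmf rademacher_pmf)))"
proof -
  let ?W = "\<lambda>\<theta>. ennreal (pmf (spike_prior d p M) \<theta>)" and ?h = "ennreal ((1/2) ^ d)"
    and ?y = "signed_shift d \<delta>"
  have "(\<Sum>\<epsilon>\<in>sign_vectors d. ?h * c) = c"
    by (simp only: sum_distrib_right[symmetric] sum_sign_vectors_uniform mult_1)
  then have "c * (\<Sum>\<theta>\<in>A. ?W \<theta>) = (\<Sum>\<theta>\<in>A. ?W \<theta> * (\<Sum>\<epsilon>\<in>sign_vectors d. ?h * c))"
    by (simp only: sum_distrib_right[symmetric]) (rule mult.commute)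
  also have "\<dots> \<le> (\<Sum>\<theta>\<in>A. ?W \<theta> * (\<Sum>\<epsilon>\<in>sign_vectors d. ?h * (F0 (?y \<theta> \<epsilon>) + F1 \<theta> (?y \<theta> \<epsilon>))))"
    using split by (intro sum_mono mult_left_mono) auto
  also have "\<dots> = (\<Sum>\<theta>\<in>A. ?W \<theta> * (\<Sum>\<epsilon>\<in>sign_vectors d. ?h * F0 (?y \<theta> \<epsilon>)))
      + (\<Sum>\<theta>\<in>A. ?W \<theta> * (\<Sum>\<epsilon>\<in>sign_vectors d. ?h * F1 \<theta> (?y \<theta> \<epsilon>)))"
    by (simp add: distrib_left sum.distrib)
  also have "\<dots> \<le> (\<integral>\<^sup>+ y. F0 y \<partial>obs_law d (\<lambda>_. 0) 1 (borel_of_pmf (spike_rademacher_pmf p M \<delta>)))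
      + (\<Sum>\<theta>\<in>A. ?W \<theta> * (\<integral>\<^sup>+ y. F1 \<theta> y \<partial>obs_law d \<theta> \<delta> (borel_of_pmf rademacher_pmf)))"
  proof (rule add_mono)
    have "(\<Sum>\<theta>\<in>A. ?W \<theta> * (\<Sum>\<epsilon>\<in>sign_vectors d. ?h * F0 (?y \<theta> \<epsilon>)))
        \<le> (\<Sum>\<theta>\<in>spike_patterns d M. ?W \<theta> * (\<Sum>\<epsilon>\<in>sign_vectors d. ?h * F0 (?y \<theta> \<epsilon>)))"
      by (rule sum_mono2[OF finite_PiE_dflt A]) auto
    also have "\<dots> \<le> (\<integral>\<^sup>+ y. F0 y \<partial>obs_law d (\<lambda>_. 0) 1 (borel_of_pmf (spike_rademacher_pmf p M \<delta>)))"
      by (rule nn_integral_obs_spike_rademacher_ge)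
    finally show "(\<Sum>\<theta>\<in>A. ?W \<theta> * (\<Sum>\<epsilon>\<in>sign_vectors d. ?h * F0 (?y \<theta> \<epsilon>))) \<le> \<dots>" .
    show "(\<Sum>\<theta>\<in>A. ?W \<theta> * (\<Sum>\<epsilon>\<in>sign_vectors d. ?h * F1 \<theta> (?y \<theta> \<epsilon>)))
        \<le> (\<Sum>\<theta>\<in>A. ?W \<theta> * (\<integral>\<^sup>+ y. F1 \<theta> y \<partial>obs_law d \<theta> \<delta> (borel_of_pmf rademacher_pmf)))"
      by (intro sum_mono mult_left_mono nn_integral_obs_rademacher_ge \<delta>_pos) simp
  qed
  finally show ?thesis .
qed

lemma prob_moderately_sparse_spike_patterns:
  fixes s d :: nat
  assumes s: "1 \<le> s" "s \<le> d" and p: "p = real s / (4 * real d)"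
  shows "(\<Sum>\<theta>\<in>{\<theta>\<in>spike_patterns d M. s \<le> 64 * card {i\<in>{..<d}. \<theta> i \<noteq> 0}
                                      \<and> card {i\<in>{..<d}. \<theta> i \<noteq> 0} \<le> s}.
            pmf (spike_prior d p M) \<theta>) \<ge> 3/40"
proof -
  let ?K = "\<lambda>\<theta>. card {i\<in>{..<d}. \<theta> i \<noteq> 0}" and ?\<Pi> = "spike_prior d p M"
  have "(\<Sum>\<theta>\<in>{\<theta>\<in>spike_patterns d M. s \<le> 64 * ?K \<theta> \<and> ?K \<theta> \<le> s}. pmf ?\<Pi> \<theta>)
      = measure ?\<Pi> ({\<theta>. s \<le> 64 * ?K \<theta> \<and> ?K \<theta> \<le> s} \<inter> set_pmf ?\<Pi>)"
    using p_pos p_less_1 M_pos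
    by (subst measure_measure_pmf_finite) (auto simp: set_spike_prior Int_commute Collect_conj_eq)
  also have "\<dots> = measure (map_pmf ?K ?\<Pi>) {k. s \<le> 64 * k \<and> k \<le> s}"
    by (simp add: measure_Int_set_pmf vimage_def)
  also have "\<dots> = measure (binomial_pmf d p) {k. s \<le> 64 * k \<and> k \<le> s}"
    using p_pos p_less_1 M_pos by (subst map_card_nonzero_spike_prior) simp_all
  finally show ?thesis
    using binomial_pmf_prob_between_ge[OF s] p by simp
qed

lemma loss_two_point_spike_pattern:
  assumes l: "l \<in> loss_class" and x: "0 \<le> x" and r: "0 < r"
    and \<theta>: "\<theta> \<in> spike_patterns d M" "s \<le> 64 * card {i\<in>{..<d}. \<theta> i \<noteq> 0}"
    and x_le: "x \<le> r * M * sqrt s / 16"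
  shows "l x \<le> l (r * \<bar>t\<bar>) + l (r * \<bar>(t - l2norm d \<theta>) / \<delta>\<bar>)"
proof -
  let ?K = "card {i\<in>{..<d}. \<theta> i \<noteq> 0}"
  have "sqrt s \<le> sqrt (64 * ?K)"
    using \<theta>(2) by (intro real_sqrt_le_mono) linarith
  then have "sqrt s \<le> 8 * sqrt ?K"
    by (simp add: real_sqrt_mult)
  then have "r * M * sqrt s / 16 \<le> r * (M * sqrt ?K) / 2"
    using r M_pos by (simp add: field_simps mult_left_mono)
  then have "x \<le> r * l2norm d \<theta> / 2"
    unfolding l2norm_spike_pattern[OF \<theta>(1) M_pos] using x_le by linarith
  then show ?thesis
    using \<delta>_pos \<delta>_less_1 by (intro loss_two_point[OF l x r]) simp_all
qed

lemma worst_risk_ge: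
  fixes s d :: nat and l :: "real \<Rightarrow> real"
  assumes s: "1 \<le> s" "s \<le> d" and p: "p = real s / (4 * real d)"
    and G: "borel_of_pmf (spike_rademacher_pmf p M \<delta>) \<in> \<G>" "borel_of_pmf rademacher_pmf \<in> \<G>"
    and l: "l \<in> loss_class" and x: "0 \<le> x" and r: "0 < r" and x_le: "x \<le> r * M * sqrt s / 16"
  shows "ennreal (l x * 3 / 80) \<le> worst_risk l r d s \<G> T"
proof -
  let ?K = "\<lambda>\<theta>. card {i\<in>{..<d}. \<theta> i \<noteq> 0}" and ?\<Pi> = "spike_prior d p M"
    and ?Wr = "worst_risk l r d s \<G> T"
  define Good where "Good = {\<theta>\<in>spike_patterns d M. s \<le> 64 * ?K \<theta> \<and> ?K \<theta> \<le> s}"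
  define F0 where "F0 = (\<lambda>y. ennreal (l (r * \<bar>T y\<bar>)))"
  define F1 where "F1 = (\<lambda>\<theta> y. ennreal (l (r * \<bar>(T y - l2norm d \<theta>) / \<delta>\<bar>)))"
  let ?R0 = "\<integral>\<^sup>+ y. F0 y \<partial>obs_law d (\<lambda>_. 0) 1 (borel_of_pmf (spike_rademacher_pmf p M \<delta>))"
  let ?R1 = "\<lambda>\<theta>. \<integral>\<^sup>+ y. F1 \<theta> y \<partial>obs_law d \<theta> \<delta> (borel_of_pmf rademacher_pmf)"
  let ?P = "\<Sum>\<theta>\<in>Good. pmf ?\<Pi> \<theta>"
  have Good: "Good \<subseteq> spike_patterns d M" "finite Good"
    unfolding Good_def by (auto intro: finite_subset[OF _ finite_PiE_dflt])
  have "(\<lambda>_. 0) \<in> sparse_set d s" "l2norm d (\<lambda>_. 0) = 0"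
    by (simp_all add: sparse_set_def l2norm_def)
  then have zero_risk: "?R0 \<le> ?Wr"
    using risk_le_worst_risk[OF G(1) zero_less_one, of "\<lambda>_. 0" d s l r T] by (simp add: risk_def F0_def)
  have good_risk: "?R1 \<theta> \<le> ?Wr" if "\<theta> \<in> Good" for \<theta>
  proof -
    have "\<theta> \<in> sparse_set d s"
      using that unfolding Good_def by (auto intro: spike_pattern_sparse)
    then show ?thesis
      using risk_le_worst_risk[OF G(2) \<delta>_pos, of \<theta> d s l r T] unfolding risk_def F1_def by simp
  qed
  have "ennreal (l x) \<le> F0 y + F1 \<theta> y" if "\<theta> \<in> Good" for \<theta> y
    using that loss_two_point_spike_pattern[OF l x r _ _ x_le, where t = "T y"] loss_nonneg[OF l] r
    unfolding Good_def F0_def F1_def by (simp add: ennreal_plus[symmetric] del: ennreal_plus)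
  then have "ennreal (l x) * ennreal ?P \<le> ?R0 + (\<Sum>\<theta>\<in>Good. ennreal (pmf ?\<Pi> \<theta>) * ?R1 \<theta>)"
    using mixture_risk_bound[OF Good(1)] by simp
  also have "\<dots> \<le> ?Wr + (\<Sum>\<theta>\<in>Good. ennreal (pmf ?\<Pi> \<theta>) * ?Wr)"
    by (intro add_mono zero_risk sum_mono mult_left_mono good_risk) auto
  also have "\<dots> = ?Wr + ennreal (measure ?\<Pi> Good) * ?Wr"
    by (simp only: sum_distrib_right[symmetric] sum_ennreal pmf_nonneg measure_measure_pmf_finite[OF Good(2)])
  also have "\<dots> \<le> ?Wr + 1 * ?Wr"
    by (intro add_left_mono mult_right_mono) simp_all
  finally have main: "ennreal (l x) * ennreal ?P \<le> 2 * ?Wr"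
    by (simp add: mult_2)
  have prob: "3 / 40 \<le> ?P"
    using prob_moderately_sparse_spike_patterns[OF s p] unfolding Good_def .
  have "ennreal (l x * (3 / 40) / 2) \<le> ?Wr"
    by (rule ennreal_half_mult_le[OF loss_nonneg[OF l x] prob main])
  then show ?thesis
    by simp
qed

end

section \<open>Choice of the spike height\<close>

text \<open>The spike height stays out of the window \<open>(1/2, 2)\<close> containing \<open>\<delta>\<close> and \<open>2 \<delta>\<close>:
  a small spike puts no mass beyond \<open>2\<close>, a large one is as large as the tail budget allows.\<close>
lemma spike_height_exists:
  fixes A R :: real
  assumes A: "0 < A" "A \<le> 1" and R: "1 \<le> R"
  obtains M where "0 < M" "M \<le> A * R" "A\<^sup>2 / 8 * R \<le> M" "M \<le> 1/4 \<or> (2 \<le> M \<and> M = A * R)"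
proof (cases "2 \<le> A * R")
  case True
  have "A * A * R \<le> A * R"
    using A R mult_left_le_one_le[of "A * R" A] by (simp add: mult.assoc)
  with True show ?thesis
    by (intro that[of "A * R"]) (auto simp: power2_eq_square)
next
  case False
  then have "A\<^sup>2 / 8 * R < A / 4" "A / 4 \<le> A * R"
    using A R by (auto simp: power2_eq_square field_simps)
  then show ?thesis
    using A by (intro that[of "A / 4"]) auto
qed

lemma worst_risk_tail_class_ge:
  fixes s d :: nat and l :: "real \<Rightarrow> real"
  assumes l: "l \<in> loss_class" and x: "0 < x" and A: "0 < A" "A \<le> 1" and R: "1 \<le> R"
    and s: "1 \<le> s" "s \<le> d"
    and variance: "(A * R)\<^sup>2 \<le> real d / real s"
    and bnd: "\<And>t. 2 \<le> t \<Longrightarrow> 0 \<le> bnd t"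
    and tail: "\<And>t. 2 \<le> t \<Longrightarrow> t \<le> 2 * (A * R) \<Longrightarrow> real s / (4 * real d) \<le> bnd t"
  shows "ennreal (l x * 3 / 80) \<le> worst_risk l (128 * x / A\<^sup>2 / (sqrt s * R)) d s (tail_class bnd) T"
proof -
  define p where "p = real s / (4 * real d)"
  obtain M where M: "0 < M" "M \<le> A * R" "A\<^sup>2 / 8 * R \<le> M" "M \<le> 1/4 \<or> (2 \<le> M \<and> M = A * R)"
    using spike_height_exists[OF A R] .
  define \<delta> where "\<delta> = sqrt (1 - p * M\<^sup>2)"
  have p: "0 < p" "p < 1" "p * (real d / real s) = 1/4"
    using s by (auto simp: p_def field_simps)
  have pM: "0 < p * M\<^sup>2" "p * M\<^sup>2 \<le> 1/4"
  proof -
    have "M\<^sup>2 \<le> (A * R)\<^sup>2"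
      using M by (intro power_mono) auto
    then have "p * M\<^sup>2 \<le> p * (real d / real s)"
      using p variance by (intro mult_left_mono) auto
    then show "p * M\<^sup>2 \<le> 1/4" using p(3) by linarith
    show "0 < p * M\<^sup>2" using p M by simp
  qed
  have \<delta>: "p * M\<^sup>2 + \<delta>\<^sup>2 = 1" "1/2 < \<delta>" "\<delta> < 1"
  proof -
    show "p * M\<^sup>2 + \<delta>\<^sup>2 = 1" "\<delta> < 1"
      unfolding \<delta>_def using pM by simp_all
    show "1/2 < \<delta>"
      unfolding \<delta>_def using pM by (intro real_less_rsqrt) (simp add: power_divide)
  qed
  interpret spike_rademacher p M \<delta>
    using p M \<delta> by unfold_locales auto
  have "p \<le> bnd t" if "2 \<le> t" "t < M + \<delta>" for t
    using M(4) \<delta>(3) that unfolding p_def by (intro tail) auto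
  then have "borel_of_pmf (spike_rademacher_pmf p M \<delta>) \<in> tail_class bnd"
    by (intro spike_rademacher_tail_class \<delta>(1) bnd)
  moreover have "borel_of_pmf rademacher_pmf \<in> tail_class bnd"
    using bnd by (rule rademacher_tail_class)
  moreover have "0 < 128 * x / A\<^sup>2 / (sqrt s * R)"
    using x A R s by simp
  moreover have "x \<le> 128 * x / A\<^sup>2 / (sqrt s * R) * M * sqrt s / 16"
  proof -
    have "x = 8 * x * (A\<^sup>2 / 8 * R) / (A\<^sup>2 * R)"
      using A R by (simp add: field_simps)
    also have "\<dots> \<le> 8 * x * M / (A\<^sup>2 * R)"
      using M(3) x A R by (intro divide_right_mono mult_left_mono) auto
    also have "\<dots> = 128 * x / A\<^sup>2 / (sqrt s * R) * M * sqrt s / 16"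
      using s by (simp add: field_simps)
    finally show ?thesis .
  qed
  ultimately show ?thesis
    using l x by (intro worst_risk_ge[OF s p_def]) simp_all
qed

lemma loss_class_posE:
  assumes "l \<in> loss_class"
  obtains x where "0 < x" "0 < l x"
proof -
  obtain x where "0 \<le> x" "l x \<noteq> 0"
    using assms unfolding loss_class_def by blast
  moreover have "x \<noteq> 0" "0 \<le> l x"
    using assms \<open>0 \<le> x\<close> \<open>l x \<noteq> 0\<close> unfolding loss_class_def by auto
  ultimately have "0 < x" "0 < l x"
    by auto
  then show ?thesis
    by (rule that)
qed

lemma minimax_lower_bound_tail_class:
  fixes l :: "real \<Rightarrow> real" and R :: "nat \<Rightarrow> nat \<Rightarrow> real" and bnd :: "real \<Rightarrow> real"
  assumes l: "l \<in> loss_class" and A: "0 < A" "A \<le> 1"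
    and R: "\<And>s d. 1 \<le> s \<Longrightarrow> s \<le> d \<Longrightarrow> 1 \<le> R s d"
    and variance: "\<And>s d. 1 \<le> s \<Longrightarrow> s \<le> d \<Longrightarrow> (A * R s d)\<^sup>2 \<le> real d / real s"
    and bnd: "\<And>t. 2 \<le> t \<Longrightarrow> 0 \<le> bnd t"
    and tail: "\<And>s d t. 1 \<le> s \<Longrightarrow> s \<le> d \<Longrightarrow> 2 \<le> t \<Longrightarrow> t \<le> 2 * (A * R s d)
                 \<Longrightarrow> real s / (4 * real d) \<le> bnd t"
  shows "\<exists>c>0. \<exists>c'>0. \<forall>s d::nat. 1 \<le> s \<and> s \<le> d \<longrightarrow>
           (INF T\<in>estimators d. worst_risk l (c / (sqrt (real s) * R s d)) d s (tail_class bnd) T)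
             \<ge> ennreal c'"
proof -
  obtain x where x: "0 < x" "0 < l x"
    using loss_class_posE[OF l] .
  have "ennreal (l x * 3 / 80)
      \<le> (INF T\<in>estimators d. worst_risk l (128 * x / A\<^sup>2 / (sqrt s * R s d)) d s (tail_class bnd) T)"
    if "1 \<le> s" "s \<le> d" for s d
    using worst_risk_tail_class_ge[OF l x(1) A R[OF that] that variance[OF that] bnd tail[OF that]]
    by (rule INF_greatest)
  moreover have "0 < 128 * x / A\<^sup>2" "0 < l x * 3 / 80"
    using x A by simp_all
  ultimately show ?thesis
    by blast
qed

section \<open>Polynomial and sub-exponential tails\<close>

lemma scaled_le_of_tail_window:
  fixes \<tau> A R t :: real
  assumes "0 < \<tau>" "A \<le> \<tau> / 2" "0 \<le> R" "t \<le> 2 * (A * R)"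
  shows "t / \<tau> \<le> R"
proof -
  have "2 * (A * R) \<le> \<tau> * R"
    using assms(2,3) by (simp add: mult.assoc[symmetric] mult_right_mono)
  then show ?thesis
    using assms(1,4) by (simp add: divide_simps mult.commute)
qed

lemma poly_tail_budget:
  fixes s d :: nat
  assumes "0 < a" "0 < \<tau>" "2 \<le> t" "1 \<le> s" "s \<le> d" and t: "t / \<tau> \<le> (real d / real s) powr (1 / a)"
  shows "real s / (4 * real d) \<le> (\<tau> / t) powr a"
proof -
  have "(t / \<tau>) powr a \<le> ((real d / real s) powr (1 / a)) powr a"
    using assms by (intro powr_mono2) auto
  also have "\<dots> = real d / real s"
    using assms by (simp add: powr_powr)
  finally have "real s / real d \<le> (\<tau> / t) powr a"
    using assms by (simp add: powr_divide field_simps)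
  moreover have "real s / (4 * real d) \<le> real s / real d"
    using assms by (simp add: frac_le)
  ultimately show ?thesis
    by linarith
qed

lemma minimax_lower_bound_poly_class:
  fixes a \<tau> :: real and l :: "real \<Rightarrow> real"
  assumes a: "2 \<le> a" and \<tau>: "0 < \<tau>" and l: "l \<in> loss_class"
  shows "\<exists>c>0. \<exists>c'>0. \<forall>s d::nat. 1 \<le> s \<and> s \<le> d \<longrightarrow>
           (INF T\<in>estimators d. worst_risk l (c / (sqrt (real s) * (real d / real s) powr (1 / a)))
              d s (poly_class a \<tau>) T) \<ge> ennreal c'"
proof -
  define A where "A = min 1 (\<tau> / 2)"
  have A: "0 < A" "A \<le> 1" "A \<le> \<tau> / 2"
    using \<tau> by (auto simp: A_def)
  have "poly_class a \<tau> = tail_class (\<lambda>t. (\<tau> / t) powr a)"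
    by (simp add: poly_class_def tail_class_def)
  moreover have "\<exists>c>0. \<exists>c'>0. \<forall>s d::nat. 1 \<le> s \<and> s \<le> d \<longrightarrow>
           (INF T\<in>estimators d. worst_risk l (c / (sqrt (real s) * (real d / real s) powr (1 / a)))
              d s (tail_class (\<lambda>t. (\<tau> / t) powr a)) T) \<ge> ennreal c'"
  proof (rule minimax_lower_bound_tail_class[OF l A(1,2)])
    fix s d :: nat assume s: "1 \<le> s" "s \<le> d"
    then have ratio: "1 \<le> real d / real s" by simp
    show R: "1 \<le> (real d / real s) powr (1 / a)"
      using ratio a by (intro ge_one_powr_ge_zero) auto
    have "(A * (real d / real s) powr (1 / a))\<^sup>2 \<le> ((real d / real s) powr (1 / a))\<^sup>2"
      using A R by (intro power_mono) (auto simp: mult_left_le_one_le)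
    also have "\<dots> = (real d / real s) powr (2 / a)"
      by (simp add: power2_eq_square powr_add[symmetric])
    also have "\<dots> \<le> (real d / real s) powr 1"
      using ratio a by (intro powr_mono) auto
    finally show "(A * (real d / real s) powr (1 / a))\<^sup>2 \<le> real d / real s"
      using ratio by simp
    fix t :: real assume "2 \<le> t" "t \<le> 2 * (A * (real d / real s) powr (1 / a))"
    then show "real s / (4 * real d) \<le> (\<tau> / t) powr a"
      using a \<tau> s A(3) R by (intro poly_tail_budget scaled_le_of_tail_window) auto
  qed simp
  ultimately show ?thesis
    by simp
qed

lemma one_plus_ln_powr_le:
  fixes a x :: real
  assumes "0 < a" "1 \<le> x"
  shows "(1 + ln x) powr (2 / a) \<le> (1 + 2 / a) powr (2 / a) * x"
proof -
  define y where "y = x powr (a / 2)"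
  have y: "1 \<le> y"
    using assms by (simp add: y_def ge_one_powr_ge_zero)
  have "a / 2 * ln x = ln y"
    using assms by (simp add: y_def ln_powr)
  also have "\<dots> \<le> y - 1"
    using y by (intro ln_le_minus_one) auto
  moreover have "a / 2 * ((1 + 2 / a) * y) = a / 2 * y + y" "a / 2 \<le> a / 2 * y"
    using assms y by (simp_all add: field_simps)
  ultimately have "a / 2 * (1 + ln x) \<le> a / 2 * ((1 + 2 / a) * y)"
    unfolding distrib_left by linarith
  then have "1 + ln x \<le> (1 + 2 / a) * y"
    by (rule mult_left_le_imp_le) (use assms in simp)
  then have "(1 + ln x) powr (2 / a) \<le> ((1 + 2 / a) * y) powr (2 / a)"
    using assms by (intro powr_mono2) auto
  also have "\<dots> = (1 + 2 / a) powr (2 / a) * x"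
    using assms y by (simp add: powr_mult y_def powr_powr)
  finally show ?thesis .
qed

lemma ln_exp_times_ratio:
  fixes s d :: nat
  assumes "1 \<le> s" "s \<le> d"
  shows "ln (exp 1 * real d / real s) = 1 + ln (real d / real s)" "1 \<le> ln (exp 1 * real d / real s)"
proof -
  show "ln (exp 1 * real d / real s) = 1 + ln (real d / real s)"
    using assms by (simp add: ln_div ln_mult)
  then show "1 \<le> ln (exp 1 * real d / real s)"
    using assms by simp
qed

lemma subexp_variance_budget:
  fixes s d :: nat
  assumes "0 < a" "1 \<le> s" "s \<le> d" and A: "A\<^sup>2 * (1 + 2 / a) powr (2 / a) \<le> 1"
  shows "(A * ln (exp 1 * real d / real s) powr (1 / a))\<^sup>2 \<le> real d / real s"
proof -
  have ratio: "1 \<le> real d / real s"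
    using assms by simp
  have "(A * ln (exp 1 * real d / real s) powr (1 / a))\<^sup>2 = A\<^sup>2 * (1 + ln (real d / real s)) powr (2 / a)"
    unfolding ln_exp_times_ratio(1)[OF assms(2,3)]
    by (simp add: power_mult_distrib power2_eq_square powr_add[symmetric])
  also have "\<dots> \<le> A\<^sup>2 * ((1 + 2 / a) powr (2 / a) * (real d / real s))"
    using assms ratio by (intro mult_left_mono one_plus_ln_powr_le) auto
  also have "\<dots> = (A\<^sup>2 * (1 + 2 / a) powr (2 / a)) * (real d / real s)"
    by (simp only: mult.assoc)
  also have "\<dots> \<le> real d / real s"
    using A ratio by (intro mult_left_le_one_le) auto
  finally show ?thesis .
qed

lemma subexp_tail_budget:
  fixes s d :: nat
  assumes "0 < a" "0 < \<tau>" "2 \<le> t" "1 \<le> s" "s \<le> d"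
    and t: "t / \<tau> \<le> ln (exp 1 * real d / real s) powr (1 / a)"
  shows "real s / (4 * real d) \<le> 2 * exp (- ((t / \<tau>) powr a))"
proof -
  let ?L = "ln (exp 1 * real d / real s)"
  have "(t / \<tau>) powr a \<le> (?L powr (1 / a)) powr a"
    using assms by (intro powr_mono2) auto
  also have "\<dots> = ?L"
    using ln_exp_times_ratio(2)[OF assms(4,5)] assms(1) by (simp add: powr_powr)
  finally have "exp (- ?L) \<le> exp (- ((t / \<tau>) powr a))"
    by simp
  moreover have "exp (- ?L) = real s / (exp 1 * real d)"
    using assms by (simp add: exp_minus)
  moreover have "real s / (4 * real d) \<le> 2 * (real s / (exp 1 * real d))"
    using assms exp_le by (simp add: field_simps)
  ultimately show ?thesis
    by linarith
qed

lemma minimax_lower_bound_subexp_class: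
  fixes a \<tau> :: real and l :: "real \<Rightarrow> real"
  assumes a: "0 < a" and \<tau>: "0 < \<tau>" and l: "l \<in> loss_class"
  shows "\<exists>c>0. \<exists>c'>0. \<forall>s d::nat. 1 \<le> s \<and> s \<le> d \<longrightarrow>
           (INF T\<in>estimators d. worst_risk l (c / (sqrt (real s) * ln (exp 1 * real d / real s) powr (1 / a)))
              d s (subexp_class a \<tau>) T) \<ge> ennreal c'"
proof -
  define C where "C = (1 + 2 / a) powr (2 / a)"
  define A where "A = min 1 (min (\<tau> / 2) (1 / sqrt C))"
  have C: "1 \<le> C"
    using a by (simp add: C_def ge_one_powr_ge_zero)
  have A: "0 < A" "A \<le> 1" "A \<le> \<tau> / 2" "A\<^sup>2 * C \<le> 1"
  proof -
    show "0 < A" "A \<le> 1" "A \<le> \<tau> / 2"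
      using \<tau> C by (auto simp: A_def)
    have "A\<^sup>2 \<le> (1 / sqrt C)\<^sup>2"
      using \<open>0 < A\<close> by (intro power_mono) (auto simp: A_def)
    then show "A\<^sup>2 * C \<le> 1"
      using C by (simp add: power_divide field_simps)
  qed
  have "subexp_class a \<tau> = tail_class (\<lambda>t. 2 * exp (- ((t / \<tau>) powr a)))"
    by (simp add: subexp_class_def tail_class_def)
  moreover have "\<exists>c>0. \<exists>c'>0. \<forall>s d::nat. 1 \<le> s \<and> s \<le> d \<longrightarrow>
           (INF T\<in>estimators d. worst_risk l (c / (sqrt (real s) * ln (exp 1 * real d / real s) powr (1 / a)))
              d s (tail_class (\<lambda>t. 2 * exp (- ((t / \<tau>) powr a)))) T) \<ge> ennreal c'"
  proof (rule minimax_lower_bound_tail_class[OF l A(1,2)])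
    fix s d :: nat assume s: "1 \<le> s" "s \<le> d"
    show R: "1 \<le> ln (exp 1 * real d / real s) powr (1 / a)"
      using ln_exp_times_ratio(2)[OF s] a by (intro ge_one_powr_ge_zero) auto
    show "(A * ln (exp 1 * real d / real s) powr (1 / a))\<^sup>2 \<le> real d / real s"
      using a s A(4) unfolding C_def by (rule subexp_variance_budget)
    fix t :: real assume "2 \<le> t" "t \<le> 2 * (A * ln (exp 1 * real d / real s) powr (1 / a))"
    then show "real s / (4 * real d) \<le> 2 * exp (- ((t / \<tau>) powr a))"
      using a \<tau> s A(3) R by (intro subexp_tail_budget scaled_le_of_tail_window) auto
  qed simp
  ultimately show ?thesis
    by simp
qed

theorem theorem2:
  shows "(\<forall>a>0. \<forall>\<tau>>0. \<forall>l\<in>loss_class. \<exists>c>0. \<exists>c'>0. \<forall>s d::nat. 1 \<le> s \<and> s \<le> d \<longrightarrow>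
            (INF T\<in>estimators d.
               worst_risk l (c / (sqrt (real s) * ln (exp 1 * real d / real s) powr (1 / a)))
                 d s (subexp_class a \<tau>) T) \<ge> ennreal c')
       \<and> (\<forall>a\<ge>2. \<forall>\<tau>>0. \<forall>l\<in>loss_class. \<exists>c>0. \<exists>c'>0. \<forall>s d::nat. 1 \<le> s \<and> s \<le> d \<longrightarrow>
            (INF T\<in>estimators d.
               worst_risk l (c / (sqrt (real s) * (real d / real s) powr (1 / a)))
                 d s (poly_class a \<tau>) T) \<ge> ennreal c')"
  using minimax_lower_bound_subexp_class minimax_lower_bound_poly_class by blast

end
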